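(* Let $t^*$ maximize $u(t)$ over all tests $t\subseteq[n]$ with $|t|\le G$. Then for every $B\ge1$ and every testing regime $T\in\mathcal T^B$ (overlapping allowed), $u(T)\le B\cdot u(t^* )$.
   Context: Population $[n]$; individual $i$ is healthy with probability $q_i\in[0,1]$, independently, with utility $u_i\ge0$. For $S\subseteq[n]$, $q_S=\prod_{i\in S}q_i$. A test is a set $t\subseteq[n]$ with $|t|\le G$, negative iff all members are healthy; $u(t)=q_t\sum_{i\in t}u_i$. A testing regime is a tuple $T=(t_1,\dots,t_B)$ of tests; $\mathcal T^B$ is the set of all of them. Welfare $u(T)=\sum_iu_iP^T_i$, where $P^T_i$ is the probability that $i$ is in at least one negative test of $T$. *)

theory Defs
  imports "HOL-Analysis.Analysis"
begin

text \<open>Population is {..<n}. Individual i is healthy with probability q i, independently.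
  A health outcome is the set h of healthy individuals; its probability is below.\<close>

definition outcome_prob :: "nat \<Rightarrow> (nat \<Rightarrow> real) \<Rightarrow> nat set \<Rightarrow> real" where
  "outcome_prob n q h = (\<Prod>i\<in>h. q i) * (\<Prod>i\<in>{..<n} - h. 1 - q i)"

definition qS :: "(nat \<Rightarrow> real) \<Rightarrow> nat set \<Rightarrow> real" where
  "qS q S = (\<Prod>i\<in>S. q i)"

definition is_test :: "nat \<Rightarrow> nat \<Rightarrow> nat set \<Rightarrow> bool" where
  "is_test n G t \<longleftrightarrow> t \<subseteq> {..<n} \<and> card t \<le> G"

definition test_utility :: "(nat \<Rightarrow> real) \<Rightarrow> (nat \<Rightarrow> real) \<Rightarrow> nat set \<Rightarrow> real" where
  "test_utility q u t = qS q t * (\<Sum>i\<in>t. u i)"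

definition regimes :: "nat \<Rightarrow> nat \<Rightarrow> nat \<Rightarrow> nat set list set" where
  "regimes n G B = {T. length T = B \<and> (\<forall>t\<in>set T. is_test n G t)}"

text \<open>Probability that i lies in at least one negative test of T
  (a test is negative iff all its members are healthy, i.e. t is a subset of h).\<close>
definition P_in_neg :: "nat \<Rightarrow> (nat \<Rightarrow> real) \<Rightarrow> nat set list \<Rightarrow> nat \<Rightarrow> real" where
  "P_in_neg n q T i = (\<Sum>h\<in>Pow {..<n}.
      (if \<exists>t\<in>set T. i \<in> t \<and> t \<subseteq> h then outcome_prob n q h else 0))"

definition welfare :: "nat \<Rightarrow> (nat \<Rightarrow> real) \<Rightarrow> (nat \<Rightarrow> real) \<Rightarrow> nat set list \<Rightarrow> real" where
  "welfare n q u T = (\<Sum>i<n. u i * P_in_neg n q T i)"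

end

theory Submission
  imports Defs
begin

text \<open>A test t is negative with probability q_t, so by the union bound individual i is
  cleared with probability at most the sum of q_t over the tests t of T containing i.
  Weighting by u_i and summing over i turns the bound into the sum of u(t) over the tests
  of T, and each of these B summands is at most u(t*).\<close>

lemma outcome_prob_nonneg:
  assumes "\<forall>i<n. 0 \<le> q i \<and> q i \<le> 1" and "h \<subseteq> {..<n}"
  shows "0 \<le> outcome_prob n q h"
  unfolding outcome_prob_def using assms by (intro mult_nonneg_nonneg prod_nonneg) auto

lemma sum_outcome_prob_supset:
  assumes t: "t \<subseteq> {..<n}"
  shows "(\<Sum>h | h \<subseteq> {..<n} \<and> t \<subseteq> h. outcome_prob n q h) = qS q t"
proof -
  define A where "A = {..<n} - t"
  have "finite A" "finite t"
    using t finite_subset by (auto simp: A_def)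
  have supsets: "{h. h \<subseteq> {..<n} \<and> t \<subseteq> h} = (\<union>) t ` Pow A"
  proof (intro set_eqI iffI)
    fix h assume "h \<in> {h. h \<subseteq> {..<n} \<and> t \<subseteq> h}"
    then have "h = t \<union> (h - t)" "h - t \<in> Pow A" by (auto simp: A_def)
    then show "h \<in> (\<union>) t ` Pow A" by blast
  qed (use t in \<open>auto simp: A_def\<close>)
  have "(\<Sum>h | h \<subseteq> {..<n} \<and> t \<subseteq> h. outcome_prob n q h)
      = (\<Sum>S\<in>Pow A. outcome_prob n q (t \<union> S))"
    unfolding supsets by (subst sum.reindex) (auto simp: inj_on_def A_def)
  also have "\<dots> = (\<Sum>S\<in>Pow A. qS q t * ((\<Prod>i\<in>S. q i) * (\<Prod>i\<in>A - S. 1 - q i)))"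
  proof (rule sum.cong[OF refl])
    fix S assume S: "S \<in> Pow A"
    then have "finite S" using \<open>finite A\<close> finite_subset by auto
    moreover have "t \<inter> S = {}" "{..<n} - (t \<union> S) = A - S" using S by (auto simp: A_def)
    ultimately show "outcome_prob n q (t \<union> S)
        = qS q t * ((\<Prod>i\<in>S. q i) * (\<Prod>i\<in>A - S. 1 - q i))"
      unfolding outcome_prob_def qS_def
      by (simp add: prod.union_disjoint[OF \<open>finite t\<close>] mult.assoc)
  qed
  also have "\<dots> = qS q t * (\<Prod>i\<in>A. q i + (1 - q i))"
    by (subst prod_add[OF \<open>finite A\<close>]) (simp add: sum_distrib_left)
  finally show ?thesis by simp
qed

lemma sum_sum_list_commute:
  "(\<Sum>i\<in>A. \<Sum>x\<leftarrow>xs. f i x) = (\<Sum>x\<leftarrow>xs. \<Sum>i\<in>A. f i x)"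
  by (induction xs) (auto simp: sum.distrib)

lemma if_bex_le_sum_list:
  fixes c :: "'a :: ordered_comm_monoid_add"
  assumes "0 \<le> c"
  shows "(if \<exists>x\<in>set xs. P x then c else 0) \<le> (\<Sum>x\<leftarrow>xs. if P x then c else 0)"
proof (cases "\<exists>x\<in>set xs. P x")
  case True
  then obtain x where "x \<in> set xs" "P x" by blast
  then have "c \<in> set (map (\<lambda>x. if P x then c else 0) xs)" by force
  then show ?thesis
    using True assms by (auto intro: member_le_sum_list)
qed (use assms in \<open>auto intro: sum_list_nonneg\<close>)

lemma P_in_neg_le_union_bound:
  assumes q01: "\<forall>i<n. 0 \<le> q i \<and> q i \<le> 1"
    and T: "\<forall>t\<in>set T. t \<subseteq> {..<n}"
  shows "P_in_neg n q T i \<le> (\<Sum>t\<leftarrow>T. if i \<in> t then qS q t else 0)"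
proof -
  let ?neg = "\<lambda>t h. if i \<in> t \<and> t \<subseteq> h then outcome_prob n q h else 0"
  have "P_in_neg n q T i \<le> (\<Sum>h\<in>Pow {..<n}. \<Sum>t\<leftarrow>T. ?neg t h)"
    unfolding P_in_neg_def
    by (intro sum_mono if_bex_le_sum_list) (auto intro: outcome_prob_nonneg[OF q01])
  also have "\<dots> = (\<Sum>t\<leftarrow>T. \<Sum>h\<in>Pow {..<n}. ?neg t h)"
    by (rule sum_sum_list_commute)
  also have "\<dots> = (\<Sum>t\<leftarrow>T. if i \<in> t then qS q t else 0)"
  proof (rule arg_cong[where f = sum_list], rule map_cong[OF refl])
    fix t assume "t \<in> set T"
    then have "(\<Sum>h\<in>Pow {..<n}. if t \<subseteq> h then outcome_prob n q h else 0) = qS q t"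
      using T sum_outcome_prob_supset[of t n q]
      by (simp add: sum.inter_filter[symmetric] Pow_def conj_commute)
    then show "(\<Sum>h\<in>Pow {..<n}. ?neg t h) = (if i \<in> t then qS q t else 0)"
      by simp
  qed
  finally show ?thesis .
qed

lemma welfare_le_sum_test_utility:
  assumes q01: "\<forall>i<n. 0 \<le> q i \<and> q i \<le> 1"
    and u_nonneg: "\<forall>i<n. 0 \<le> u i"
    and T: "\<forall>t\<in>set T. t \<subseteq> {..<n}"
  shows "welfare n q u T \<le> (\<Sum>t\<leftarrow>T. test_utility q u t)"
proof -
  have "welfare n q u T \<le> (\<Sum>i<n. u i * (\<Sum>t\<leftarrow>T. if i \<in> t then qS q t else 0))"
    unfolding welfare_def using u_nonneg
    by (intro sum_mono mult_left_mono P_in_neg_le_union_bound[OF q01 T]) auto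
  also have "\<dots> = (\<Sum>t\<leftarrow>T. \<Sum>i<n. if i \<in> t then u i * qS q t else 0)"
    by (simp add: sum_list_const_mult[symmetric] sum_sum_list_commute if_distrib cong: if_cong)
  also have "\<dots> = (\<Sum>t\<leftarrow>T. test_utility q u t)"
  proof (rule arg_cong[where f = sum_list], rule map_cong[OF refl])
    fix t assume "t \<in> set T"
    then have "{..<n} \<inter> t = t" using T by auto
    then show "(\<Sum>i<n. if i \<in> t then u i * qS q t else 0) = test_utility q u t"
      by (simp add: sum.inter_restrict[symmetric] test_utility_def sum_distrib_left mult.commute)
  qed
  finally show ?thesis .
qed

theorem mainTheorem9:
  fixes n G B :: nat and q u :: "nat \<Rightarrow> real" and tstar :: "nat set" and T :: "nat set list"
  assumes q01: "\<forall>i<n. 0 \<le> q i \<and> q i \<le> 1"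
    and u_nonneg: "\<forall>i<n. 0 \<le> u i"
    and tstar_test: "is_test n G tstar"
    and tstar_max: "\<forall>t. is_test n G t \<longrightarrow> test_utility q u t \<le> test_utility q u tstar"
    and B1: "1 \<le> B"
    and T_regime: "T \<in> regimes n G B"
  shows "welfare n q u T \<le> real B * test_utility q u tstar"
proof -
  have len: "length T = B" and tests: "\<forall>t\<in>set T. is_test n G t"
    using T_regime by (auto simp: regimes_def)
  then have "\<forall>t\<in>set T. t \<subseteq> {..<n}" by (auto simp: is_test_def)
  then have "welfare n q u T \<le> (\<Sum>t\<leftarrow>T. test_utility q u t)"
    by (rule welfare_le_sum_test_utility[OF q01 u_nonneg])
  also have "\<dots> \<le> (\<Sum>t\<leftarrow>T. test_utility q u tstar)"
    using tests tstar_max by (intro sum_list_mono) auto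
  also have "\<dots> = real B * test_utility q u tstar"
    by (simp add: sum_list_triv len)
  finally show ?thesis .
qed

end
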